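(* Let $E,F$ be vector lattices with $F$ Dedekind complete, and let $S,T\in\mathcal{U}_+(E,F)$ be disjoint elements of the vector lattice $\mathcal{U}(E,F)$, i.e. $S\wedge T=0$. Then for every $x\in E$, every weak order unit $u$ of $F$ and every $\varepsilon>0$ there exist a partition of unity $(\pi_\alpha)_{\alpha\in\Delta}$ in $\mathfrak{P}(F)$ and a family $(x_\alpha)_{\alpha\in\Delta}$ of fragments of $x$ such that \[ \pi_\alpha\big(Tx_\alpha+S(x-x_\alpha)\big)\le\varepsilon u\quad\text{for all }\alpha\in\Delta. \]
   Context: For a vector lattice $E$, an element $z$ is a fragment (component) of $x\in E$ if $|z|\wedge|x-z|=0$; $\mathcal{F}_x$ denotes the set of fragments of $x$. An operator $T\colon E\to F$ between vector lattices is orthogonally additive if $T(x+y)=Tx+Ty$ whenever $|x|\wedge|y|=0$; it is order bounded if it maps order bounded sets to order bounded sets. $\mathcal{U}(E,F)$ (abstract Uryson operators) is the set of orthogonally additive order bounded (in general nonlinear) operators $E\to F$, ordered by $S\le T$ iff $Tx-Sx\ge 0$ for all $x\in E$; $\mathcal{U}_+(E,F)$ is its positive cone. When $F$ is Dedekind complete, $\mathcal{U}(E,F)$ is a Dedekind complete vector lattice. $\mathfrak{P}(F)$ denotes the Boolean algebra of band (order) projections of the Dedekind complete vector lattice $F$, with $\rho'\le\rho''$ iff $\rho'\rho''=\rho'$, $\rho'\wedge\rho''=\rho'\rho''$, and $\rho^\perp=I_F-\rho$. A partition of unity in $\mathfrak{P}(F)$ is a family $(\rho_\xi)$ of band projections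 with $\rho_\xi\wedge\rho_\eta=0$ for $\xi\ne\eta$ and $\sup_\xi\rho_\xi=I_F$. An element $u\in F_+$ is a weak order unit if $\{u\}^{\perp\perp}=F$. *)

theory Defs
  imports Main "HOL.Real_Vector_Spaces"
begin

text \<open>Vector lattices are modelled by types of class ordered_real_vector + lattice
  (ordered real vector space whose order is a lattice order).\<close>

definition labs :: "'a::{ordered_real_vector,lattice} \<Rightarrow> 'a" where
  "labs x = sup x (- x)"

definition disj :: "'a::{ordered_real_vector,lattice} \<Rightarrow> 'a \<Rightarrow> bool" where
  "disj x y \<longleftrightarrow> inf (labs x) (labs y) = 0"

definition fragments :: "'a::{ordered_real_vector,lattice} \<Rightarrow> 'a set" where
  "fragments x = {z. disj z (x - z)}"

definition dedekind_complete :: "'b::order itself \<Rightarrow> bool" where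
  "dedekind_complete _ \<longleftrightarrow>
     (\<forall>A::'b set. A \<noteq> {} \<and> bdd_above A \<longrightarrow> (\<exists>s. (\<forall>a\<in>A. a \<le> s) \<and> (\<forall>t. (\<forall>a\<in>A. a \<le> t) \<longrightarrow> s \<le> t)))"

definition orth_additive :: "('a::{ordered_real_vector,lattice} \<Rightarrow> 'b::{ordered_real_vector,lattice}) \<Rightarrow> bool" where
  "orth_additive T \<longleftrightarrow> (\<forall>x y. disj x y \<longrightarrow> T (x + y) = T x + T y)"

text \<open>Order bounded: images of order bounded sets are order bounded
  (equivalently for order intervals, since every order bounded set lies in one).\<close>
definition order_bounded_op :: "('a::{ordered_real_vector,lattice} \<Rightarrow> 'b::{ordered_real_vector,lattice}) \<Rightarrow> bool" where
  "order_bounded_op T \<longleftrightarrow>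
     (\<forall>A::'a set. (\<exists>a b. \<forall>x\<in>A. a \<le> x \<and> x \<le> b) \<longrightarrow> (\<exists>c d. \<forall>x\<in>A. c \<le> T x \<and> T x \<le> d))"

definition uryson :: "('a::{ordered_real_vector,lattice} \<Rightarrow> 'b::{ordered_real_vector,lattice}) set" where
  "uryson = {T. orth_additive T \<and> order_bounded_op T}"

definition uryson_le :: "('a \<Rightarrow> 'b::{ordered_real_vector,lattice}) \<Rightarrow> ('a \<Rightarrow> 'b) \<Rightarrow> bool" where
  "uryson_le S T \<longleftrightarrow> (\<forall>x. 0 \<le> T x - S x)"

definition uryson_pos :: "('a::{ordered_real_vector,lattice} \<Rightarrow> 'b::{ordered_real_vector,lattice}) set" where
  "uryson_pos = {T \<in> uryson. uryson_le (\<lambda>_. 0) T}"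

definition uryson_inf_zero :: "('a::{ordered_real_vector,lattice} \<Rightarrow> 'b::{ordered_real_vector,lattice}) \<Rightarrow> ('a \<Rightarrow> 'b) \<Rightarrow> bool" where
  "uryson_inf_zero S T \<longleftrightarrow>
     uryson_le (\<lambda>_. 0) S \<and> uryson_le (\<lambda>_. 0) T \<and>
     (\<forall>R\<in>uryson. uryson_le R S \<and> uryson_le R T \<longrightarrow> uryson_le R (\<lambda>_. 0))"

definition disj_compl :: "'b::{ordered_real_vector,lattice} set \<Rightarrow> 'b set" where
  "disj_compl A = {y. \<forall>a\<in>A. disj y a}"

definition is_ideal :: "'b::{ordered_real_vector,lattice} set \<Rightarrow> bool" where
  "is_ideal B \<longleftrightarrow> 0 \<in> B \<and> (\<forall>x\<in>B. \<forall>y\<in>B. x + y \<in> B) \<and> (\<forall>c. \<forall>x\<in>B. c *\<^sub>R x \<in> B)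
     \<and> (\<forall>x\<in>B. \<forall>y. labs y \<le> labs x \<longrightarrow> y \<in> B)"

definition is_lub :: "'b::order set \<Rightarrow> 'b \<Rightarrow> bool" where
  "is_lub A s \<longleftrightarrow> (\<forall>a\<in>A. a \<le> s) \<and> (\<forall>t. (\<forall>a\<in>A. a \<le> t) \<longrightarrow> s \<le> t)"

definition is_band :: "'b::{ordered_real_vector,lattice} set \<Rightarrow> bool" where
  "is_band B \<longleftrightarrow> is_ideal B \<and> (\<forall>A s. A \<subseteq> B \<and> is_lub A s \<longrightarrow> s \<in> B)"

definition band_projection :: "('b::{ordered_real_vector,lattice} \<Rightarrow> 'b) \<Rightarrow> bool" where
  "band_projection P \<longleftrightarrow>
     (\<exists>B. is_band B \<and> (\<forall>x. P x \<in> B \<and> x - P x \<in> disj_compl B))"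

text \<open>Order in the Boolean algebra of band projections: \<rho>' \<le> \<rho>'' iff \<rho>'\<rho>'' = \<rho>'; meet is composition.\<close>
definition bp_le :: "('b \<Rightarrow> 'b) \<Rightarrow> ('b \<Rightarrow> 'b) \<Rightarrow> bool" where
  "bp_le P Q \<longleftrightarrow> P \<circ> Q = P"

definition partition_of_unity :: "'i set \<Rightarrow> ('i \<Rightarrow> ('b::{ordered_real_vector,lattice} \<Rightarrow> 'b)) \<Rightarrow> bool" where
  "partition_of_unity D \<pi> \<longleftrightarrow>
     (\<forall>a\<in>D. band_projection (\<pi> a)) \<and>
     (\<forall>a\<in>D. \<forall>b\<in>D. a \<noteq> b \<longrightarrow> \<pi> a \<circ> \<pi> b = (\<lambda>_. 0)) \<and>
     (\<forall>Q. band_projection Q \<and> (\<forall>a\<in>D. bp_le (\<pi> a) Q) \<longrightarrow> Q = id)"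

definition weak_order_unit :: "'b::{ordered_real_vector,lattice} \<Rightarrow> bool" where
  "weak_order_unit u \<longleftrightarrow> 0 \<le> u \<and> disj_compl (disj_compl {u}) = UNIV"

end

theory Submission
  imports Defs "HOL-Library.Lattice_Algebras"
begin

text \<open>Write g y = T y + S (x - y) for fragments y of x. First, S \<and> T = 0 forces every lower
  bound of the g y to be \<le> 0: the infimum of the g y, as a function of x, is orthogonally additive
  (a fragment of a disjoint sum splits into fragments of the summands), order bounded, and below
  S and T, hence below 0. Second, exhaustion: by Zorn's lemma take a maximal disjoint family of
  elements v, each disjoint from the positive part of some g y - \<epsilon> u, so that projecting onto
  the band of v gives g y \<le> \<epsilon> u. An element disjoint from the whole family lies, by maximality,
  in the band of every such positive part; projecting \<epsilon> u onto it gives a lower bound of all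
  g y, which must vanish, and since u is a weak unit the element is 0. Hence the band projections
  of the family form a partition of unity.\<close>

section \<open>Vector lattice arithmetic\<close>

text \<open>The class {ordered_real_vector, lattice} is not a subclass of lattice_ab_group_add; this
  interpretation makes the lattice-group library of Lattice_Algebras available, with labs as |_|.\<close>
interpretation VL: lattice_ab_group_add_abs labs "(+)" "0::'a::{ordered_real_vector,lattice}" "(-)" uminus "(\<le>)" "(<)" inf sup
  by (unfold_locales; simp add: labs_def)

definition pos_part :: "'a::{ordered_real_vector,lattice} \<Rightarrow> 'a" where
  "pos_part x = sup x 0"

definition neg_part :: "'a::{ordered_real_vector,lattice} \<Rightarrow> 'a" where
  "neg_part x = sup (- x) 0"

lemma labs_ge_zero [simp]: "0 \<le> labs x"
  by (rule VL.abs_ge_zero)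

lemma labs_minus [simp]: "labs (- x) = labs x"
  by (rule VL.abs_minus_cancel)

lemma labs_of_nonneg [simp]: "0 \<le> x \<Longrightarrow> labs x = x"
  by (rule VL.abs_of_nonneg)

lemma labs_eq_0_iff [simp]: "labs x = 0 \<longleftrightarrow> x = 0"
  by (rule VL.abs_eq_0)

lemma labs_triangle: "labs (x + y) \<le> labs x + labs y"
  by (rule VL.abs_triangle_ineq)

lemma le_labs: "x \<le> labs x" and minus_le_labs: "- x \<le> labs x"
  by (simp_all add: labs_def)

lemma labs_leI: "a \<le> b \<Longrightarrow> - a \<le> b \<Longrightarrow> labs a \<le> b"
  by (simp add: labs_def)

lemma pos_part_nonneg [simp]: "0 \<le> pos_part x" and neg_part_nonneg [simp]: "0 \<le> neg_part x"
  by (simp_all add: pos_part_def neg_part_def)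

lemma labs_eq_pos_part_add_neg_part: "labs x = pos_part x + neg_part x"
proof -
  have "labs x = sup x 0 - inf x 0"
    using VL.abs_prts[of x] by (simp add: VL.pprt_def VL.nprt_def)
  moreover have "- inf x 0 = sup (- x) 0"
    using VL.neg_inf_eq_sup[of x 0] by simp
  ultimately show ?thesis
    by (simp add: pos_part_def neg_part_def diff_conv_add_uminus)
qed

lemma pos_part_diff_neg_part: "pos_part x - neg_part x = x"
proof -
  have "x = sup x 0 + inf x 0"
    using VL.add_eq_inf_sup[of x 0] by simp
  moreover have "sup (- x) 0 = - inf x 0"
    using VL.neg_inf_eq_sup[of x 0] by simp
  ultimately show ?thesis
    unfolding pos_part_def neg_part_def by simp
qed

lemma pos_part_le_labs: "pos_part x \<le> labs x" and neg_part_le_labs: "neg_part x \<le> labs x"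
  using labs_eq_pos_part_add_neg_part[of x] pos_part_nonneg[of x] neg_part_nonneg[of x]
  by (metis le_add_same_cancel1, metis le_add_same_cancel2)

lemma pos_part_mono: "x \<le> y \<Longrightarrow> pos_part x \<le> pos_part y"
  by (auto simp: pos_part_def intro: le_supI1)

lemma neg_part_antimono: "x \<le> y \<Longrightarrow> neg_part y \<le> neg_part x"
  by (auto simp: neg_part_def intro: le_supI1)

lemma le_pos_part: "x \<le> pos_part x"
  by (simp add: pos_part_def)

lemma inf_add_le_add_inf:
  fixes a b c :: "'a::{ordered_real_vector,lattice}"
  assumes "0 \<le> a" "0 \<le> b" "0 \<le> c"
  shows "inf (a + b) c \<le> inf a c + inf b c"
proof -
  have "inf a c + inf b c = inf (inf (a + b) (a + c)) (inf (c + b) (c + c))"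
    by (simp add: VL.add_inf_distrib_left VL.add_inf_distrib_right inf_aci)
  moreover have "inf (a + b) c \<le> inf (inf (a + b) (a + c)) (inf (c + b) (c + c))"
    using assms by (auto intro!: le_infI intro: le_infI2 add_increasing add_increasing2)
  ultimately show ?thesis
    by simp
qed

lemma inf_add_eq_add_inf:
  fixes a b c :: "'a::{ordered_real_vector,lattice}"
  assumes "0 \<le> a" "0 \<le> b" "0 \<le> c" "inf a b = 0"
  shows "inf (a + b) c = inf a c + inf b c"
proof (rule antisym)
  show "inf (a + b) c \<le> inf a c + inf b c"
    using inf_add_le_add_inf assms by blast
  have "inf (inf a c) (inf b c) = 0"
    using assms by (metis inf.absorb1 inf_assoc inf_left_commute le_inf_iff)
  then have "inf a c + inf b c = sup (inf a c) (inf b c)"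
    using VL.add_eq_inf_sup[of "inf a c" "inf b c"] by simp
  also have "\<dots> \<le> inf (a + b) c"
    using assms by (auto intro!: le_infI intro: le_infI1 add_increasing add_increasing2)
  finally show "inf a c + inf b c \<le> inf (a + b) c" .
qed

lemma inf_pos_part_neg_part: "inf (pos_part x) (neg_part x) = 0"
proof -
  have "sup (pos_part x) (neg_part x) = labs x"
    unfolding pos_part_def neg_part_def
    by (metis labs_def labs_ge_zero sup.absorb_iff1 sup_commute sup_left_commute)
  then show ?thesis
    using VL.add_eq_inf_sup[of "pos_part x" "neg_part x"] labs_eq_pos_part_add_neg_part[of x]
    by simp
qed

lemma labs_scaleR_le: "labs (c *\<^sub>R x) \<le> \<bar>c\<bar> *\<^sub>R labs x"
proof (cases "c \<ge> 0")
  case True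
  then show ?thesis
    by (intro labs_leI)
      (auto intro: scaleR_left_mono le_labs minus_le_labs simp flip: scaleR_minus_right)
next
  case False
  then have "c *\<^sub>R x = \<bar>c\<bar> *\<^sub>R (- x)"
    by simp
  then show ?thesis
    by (metis abs_ge_zero labs_leI le_labs minus_le_labs scaleR_left_mono scaleR_minus_right labs_minus)
qed

lemma inf_scaleR_le:
  fixes a b :: "'a::{ordered_real_vector,lattice}"
  assumes "m > 0"
  shows "inf (m *\<^sub>R a) (m *\<^sub>R b) \<le> m *\<^sub>R inf a b"
proof -
  let ?i = "inf (m *\<^sub>R a) (m *\<^sub>R b)"
  have "inverse m *\<^sub>R ?i \<le> inverse m *\<^sub>R (m *\<^sub>R a)"
    using assms by (intro scaleR_left_mono) auto
  then have le_a: "inverse m *\<^sub>R ?i \<le> a"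
    using assms by simp
  have "inverse m *\<^sub>R ?i \<le> inverse m *\<^sub>R (m *\<^sub>R b)"
    using assms by (intro scaleR_left_mono) auto
  then have le_b: "inverse m *\<^sub>R ?i \<le> b"
    using assms by simp
  have "m *\<^sub>R (inverse m *\<^sub>R ?i) \<le> m *\<^sub>R inf a b"
    using le_a le_b assms by (intro scaleR_left_mono) auto
  then show ?thesis
    using assms by simp
qed

section \<open>Disjointness and fragments\<close>

lemma disj_sym: "disj x y \<longleftrightarrow> disj y x"
  by (simp add: disj_def inf_commute)

lemma disj_mono: "labs p \<le> labs q \<Longrightarrow> disj q z \<Longrightarrow> disj p z"
  unfolding disj_def by (metis antisym inf_mono labs_ge_zero le_inf_iff order_refl)

lemma disj_mono2: "labs p \<le> labs x \<Longrightarrow> labs q \<le> labs y \<Longrightarrow> disj x y \<Longrightarrow> disj p q"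
  by (meson disj_mono disj_sym)

lemma disj_add: "disj x z \<Longrightarrow> disj y z \<Longrightarrow> disj (x + y) z"
proof -
  assume "disj x z" "disj y z"
  have "inf (labs (x + y)) (labs z) \<le> inf (labs x + labs y) (labs z)"
    using labs_triangle by (rule inf_mono) simp
  also have "\<dots> \<le> inf (labs x) (labs z) + inf (labs y) (labs z)"
    by (rule inf_add_le_add_inf) auto
  also have "\<dots> = 0"
    using \<open>disj x z\<close> \<open>disj y z\<close> by (simp add: disj_def)
  finally show ?thesis
    unfolding disj_def by (simp add: antisym)
qed

lemma disj_minus [simp]: "disj (- x) z \<longleftrightarrow> disj x z"
  by (simp add: disj_def)

lemma disj_diff: "disj x z \<Longrightarrow> disj y z \<Longrightarrow> disj (x - y) z"
  using disj_add[of x z "- y"] by simp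

lemma disj_zero [simp]: "disj 0 z"
  by (simp add: disj_def inf_absorb1)

lemma disj_self_imp_zero: "disj x x \<Longrightarrow> x = 0"
  by (simp add: disj_def)

lemma disj_labs [simp]: "disj (labs x) z \<longleftrightarrow> disj x z"
  by (simp add: disj_def)

lemma disj_pos_part_neg_part: "disj (pos_part x) (neg_part x)"
  by (simp add: disj_def inf_pos_part_neg_part)

lemma disj_pos_part: "disj x z \<Longrightarrow> disj (pos_part x) z"
  using disj_mono[of "pos_part x" x z] pos_part_le_labs[of x] by simp

lemma disj_neg_part: "disj x z \<Longrightarrow> disj (neg_part x) z"
  using disj_mono[of "neg_part x" x z] neg_part_le_labs[of x] by simp

lemma disj_scaleR: "disj x z \<Longrightarrow> disj (c *\<^sub>R x) z"
proof -
  assume "disj x z"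
  define m where "m = \<bar>c\<bar> + 1"
  have m: "m > 0" "\<bar>c\<bar> \<le> m" "1 \<le> m"
    by (auto simp: m_def)
  have "inf (labs (c *\<^sub>R x)) (labs z) \<le> inf (m *\<^sub>R labs x) (m *\<^sub>R labs z)"
  proof (rule inf_mono)
    show "labs (c *\<^sub>R x) \<le> m *\<^sub>R labs x"
      using labs_scaleR_le[of c x] scaleR_right_mono[OF m(2) labs_ge_zero[of x]] by simp
    show "labs z \<le> m *\<^sub>R labs z"
      using scaleR_right_mono[OF m(3) labs_ge_zero[of z]] by simp
  qed
  also have "\<dots> \<le> m *\<^sub>R inf (labs x) (labs z)"
    using m by (intro inf_scaleR_le) auto
  also have "\<dots> = 0"
    using \<open>disj x z\<close> by (simp add: disj_def)
  finally show ?thesis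
    unfolding disj_def by (simp add: antisym)
qed

lemma labs_diff_of_inf_zero:
  fixes a b :: "'a::{ordered_real_vector,lattice}"
  assumes "0 \<le> a" "0 \<le> b" "inf a b = 0"
  shows "labs (a - b) = a + b"
proof -
  have "disj a b"
    using assms by (simp add: disj_def)
  then have "disj (a + a) (b + b)"
    by (meson disj_add disj_sym)
  then have inf_doubles: "inf (a + a) (b + b) = 0"
    using assms by (simp add: disj_def)
  have "a - b + (a + b) = a + a" "b - a + (a + b) = b + b"
    by (simp_all add: algebra_simps)
  then have "sup (a - b) (b - a) + (a + b) = sup (a + a) (b + b)"
    by (simp only: VL.add_sup_distrib_right)
  also have "\<dots> = (a + a) + (b + b)"
    using VL.add_eq_inf_sup[of "a + a" "b + b"] inf_doubles by simp
  finally show ?thesis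
    unfolding labs_def by (simp add: algebra_simps)
qed

lemma labs_add_of_disj:
  assumes "disj p q"
  shows "labs (p + q) = labs p + labs q"
proof -
  let ?A = "pos_part p + pos_part q" and ?C = "neg_part p + neg_part q"
  have cross: "disj (neg_part b) (pos_part a)" if "disj a b" for a b
    using that by (meson disj_neg_part disj_pos_part disj_sym)
  have "disj (neg_part p) ?A" "disj (neg_part q) ?A"
    using cross assms disj_pos_part_neg_part disj_add disj_sym by metis+
  then have "disj ?A ?C"
    using disj_add disj_sym by metis
  then have "inf ?A ?C = 0"
    by (simp add: disj_def add_nonneg_nonneg)
  moreover have "p + q = ?A - ?C"
    using pos_part_diff_neg_part[of p] pos_part_diff_neg_part[of q] by (simp add: algebra_simps)
  ultimately have "labs (p + q) = ?A + ?C"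
    using labs_diff_of_inf_zero[of ?A ?C] by (simp add: add_nonneg_nonneg)
  then show ?thesis
    by (simp add: labs_eq_pos_part_add_neg_part algebra_simps)
qed

lemma fragments_labs_le:
  assumes "z \<in> fragments x"
  shows "labs z \<le> labs x" "labs (x - z) \<le> labs x"
proof -
  have "labs x = labs z + labs (x - z)"
    using labs_add_of_disj[of z "x - z"] assms by (simp add: fragments_def)
  then show "labs z \<le> labs x" "labs (x - z) \<le> labs x"
    by (metis le_add_same_cancel1 labs_ge_zero, metis le_add_same_cancel2 labs_ge_zero)
qed

lemma zero_in_fragments [simp]: "0 \<in> fragments x"
  by (simp add: fragments_def)

lemma self_in_fragments [simp]: "x \<in> fragments x"
  by (simp add: fragments_def disj_sym)

lemma fragments_add:
  assumes "disj x y" "y1 \<in> fragments x" "y2 \<in> fragments y"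
  shows "y1 + y2 \<in> fragments (x + y)" "disj y1 y2" "disj (x - y1) (y - y2)"
proof -
  note le1 = fragments_labs_le[OF assms(2)] and le2 = fragments_labs_le[OF assms(3)]
  have cross: "disj y1 y2" "disj y1 (y - y2)" "disj (x - y1) y2" "disj (x - y1) (y - y2)"
    using disj_mono2[OF _ _ assms(1)] le1 le2 by blast+
  have "disj y1 (x - y1)" "disj y2 (y - y2)"
    using assms by (simp_all add: fragments_def)
  then have "disj (y1 + y2) ((x - y1) + (y - y2))"
    using cross disj_add disj_sym by metis
  moreover have "x + y - (y1 + y2) = (x - y1) + (y - y2)"
    by (simp add: algebra_simps)
  ultimately show "y1 + y2 \<in> fragments (x + y)"
    by (simp only: fragments_def mem_Collect_eq)
  show "disj y1 y2" "disj (x - y1) (y - y2)"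
    using cross by auto
qed

definition truncate_by :: "'a::{ordered_real_vector,lattice} \<Rightarrow> 'a \<Rightarrow> 'a" where
  "truncate_by x p = inf (pos_part p) (labs x) - inf (neg_part p) (labs x)"

lemma labs_truncate_by_le: "labs (truncate_by x p) \<le> inf (labs p) (labs x)"
proof -
  have "0 \<le> inf (pos_part p) (labs x)" "0 \<le> inf (neg_part p) (labs x)"
    by (simp_all add: le_infI)
  then have "labs (truncate_by x p) \<le> inf (pos_part p) (labs x) + inf (neg_part p) (labs x)"
    unfolding truncate_by_def
    using labs_triangle[of "inf (pos_part p) (labs x)" "- inf (neg_part p) (labs x)"] by simp
  also have "\<dots> = inf (pos_part p + neg_part p) (labs x)"
    by (rule inf_add_eq_add_inf[symmetric]) (simp_all add: inf_pos_part_neg_part)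
  finally show ?thesis
    by (simp add: labs_eq_pos_part_add_neg_part)
qed

lemma truncate_by_split:
  assumes "disj x y" "labs p \<le> labs x + labs y"
  shows "p = truncate_by x p + truncate_by y p"
proof -
  have inf_xy: "inf (labs x) (labs y) = 0"
    using assms(1) by (simp add: disj_def)
  have split: "q = inf q (labs x) + inf q (labs y)" if "0 \<le> q" "q \<le> labs p" for q
  proof -
    have "q = inf (labs x + labs y) q"
      using that assms(2) by (metis inf.absorb2 order_trans)
    also have "\<dots> = inf (labs x) q + inf (labs y) q"
      using that inf_xy by (intro inf_add_eq_add_inf) simp_all
    finally show ?thesis
      by (simp add: inf_commute)
  qed
  have pos: "pos_part p = inf (pos_part p) (labs x) + inf (pos_part p) (labs y)"
    by (rule split) (simp_all add: pos_part_le_labs)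
  have neg: "neg_part p = inf (neg_part p) (labs x) + inf (neg_part p) (labs y)"
    by (rule split) (simp_all add: neg_part_le_labs)
  have "p = pos_part p - neg_part p"
    by (simp add: pos_part_diff_neg_part)
  also have "\<dots> = (inf (pos_part p) (labs x) + inf (pos_part p) (labs y))
                 - (inf (neg_part p) (labs x) + inf (neg_part p) (labs y))"
    by (rule arg_cong2[where f="(-)"], rule pos, rule neg)
  also have "\<dots> = truncate_by x p + truncate_by y p"
    unfolding truncate_by_def by (rule add_diff_add)
  finally show ?thesis .
qed

lemma disj_decomposition_unique:
  assumes "disj x y" "disj a y" "disj b x" "disj a b" and "a + b = x + y"
  shows "a = x" "b = y"
proof -
  have "a - x = y - b"
    using assms(5) by (simp add: algebra_simps)
  moreover have "disj (a - x) y" "disj (a - x) b"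
    using assms(1-4) disj_diff disj_sym by metis+
  ultimately have "disj (a - x) (a - x)"
    by (metis disj_diff disj_sym)
  then have "a = x"
    using disj_self_imp_zero by fastforce
  then show "a = x" "b = y"
    using assms(5) by simp_all
qed

lemma fragments_add_split:
  assumes "disj x y" "z \<in> fragments (x + y)"
  shows "\<exists>z1 \<in> fragments x. \<exists>z2 \<in> fragments y. z = z1 + z2"
proof -
  define v where "v = x + y - z"
  have "disj z v"
    using assms(2) by (simp add: fragments_def v_def)
  have "labs z \<le> labs x + labs y" "labs v \<le> labs x + labs y"
    using fragments_labs_le[OF assms(2)] labs_triangle[of x y] unfolding v_def by (auto intro: order_trans)
  then have z_split: "z = truncate_by x z + truncate_by y z" and v_split: "v = truncate_by x v + truncate_by y v"
    using truncate_by_split[OF assms(1)] by blast+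
  have "x + y = z + v"
    by (simp add: v_def)
  also have "\<dots> = (truncate_by x z + truncate_by y z) + (truncate_by x v + truncate_by y v)"
    by (rule arg_cong2[where f="(+)"], rule z_split, rule v_split)
  also have "\<dots> = (truncate_by x z + truncate_by x v) + (truncate_by y z + truncate_by y v)"
    by (simp only: add_ac)
  finally have "(truncate_by x z + truncate_by x v) + (truncate_by y z + truncate_by y v) = x + y" ..
  moreover have under: "labs (truncate_by w t) \<le> labs w" "labs (truncate_by w t) \<le> labs t" for w t
    using labs_truncate_by_le order_trans inf_le1 inf_le2 by metis+
  then have "disj (truncate_by x s) y" "disj (truncate_by y s) x" "disj (truncate_by x s) (truncate_by y t)"
    for s t
    using disj_mono2[OF _ _ assms(1)] disj_sym by (metis order_refl)+
  ultimately have "truncate_by x z + truncate_by x v = x" "truncate_by y z + truncate_by y v = y"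
    using disj_decomposition_unique[OF assms(1)] disj_add disj_sym by metis+
  then have "x - truncate_by x z = truncate_by x v" "y - truncate_by y z = truncate_by y v"
    by (simp_all add: algebra_simps)
  moreover have "disj (truncate_by w z) (truncate_by w' v)" for w w'
    using disj_mono2[OF under(2) under(2) \<open>disj z v\<close>] .
  ultimately have "truncate_by x z \<in> fragments x" "truncate_by y z \<in> fragments y"
    unfolding fragments_def by simp_all
  then show ?thesis
    using z_split by blast
qed

section \<open>Bands and band projections\<close>

definition is_glb :: "'b::order set \<Rightarrow> 'b \<Rightarrow> bool" where
  "is_glb A g \<longleftrightarrow> (\<forall>a\<in>A. g \<le> a) \<and> (\<forall>t. (\<forall>a\<in>A. t \<le> a) \<longrightarrow> t \<le> g)"

lemma is_glb_unique: "is_glb A g \<Longrightarrow> is_glb A g' \<Longrightarrow> g = g'"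
  unfolding is_glb_def by (meson antisym)

lemma is_glb_set_plus:
  fixes A B :: "'b::ordered_ab_group_add set"
  assumes "is_glb A g" "is_glb B h"
  shows "is_glb {a + b | a b. a \<in> A \<and> b \<in> B} (g + h)"
  unfolding is_glb_def
proof (intro conjI ballI allI impI)
  fix x
  assume "x \<in> {a + b | a b. a \<in> A \<and> b \<in> B}"
  then show "g + h \<le> x"
    using assms unfolding is_glb_def by (auto simp: add_mono)
next
  fix t
  assume t: "\<forall>x\<in>{a + b | a b. a \<in> A \<and> b \<in> B}. t \<le> x"
  have "t - g \<le> b" if "b \<in> B" for b
  proof -
    have "\<forall>a\<in>A. t - b \<le> a"
      using t that by (force simp: diff_le_eq add.commute)
    then have "t - b \<le> g"
      using assms(1) unfolding is_glb_def by blast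
    then show ?thesis
      by (simp add: diff_le_eq add.commute)
  qed
  then have "t - g \<le> h"
    using assms(2) unfolding is_glb_def by blast
  then show "t \<le> g + h"
    by (simp add: diff_le_eq add.commute)
qed

lemma dedekind_complete_has_lub:
  fixes A :: "'b::order set"
  assumes "dedekind_complete TYPE('b)" "A \<noteq> {}" "\<And>a. a \<in> A \<Longrightarrow> a \<le> M"
  shows "\<exists>s. is_lub A s"
  using assms bdd_aboveI[of A M] unfolding dedekind_complete_def is_lub_def by blast

lemma dedekind_complete_has_glb:
  fixes A :: "'b::ordered_ab_group_add set"
  assumes "dedekind_complete TYPE('b)" "A \<noteq> {}" "\<And>a. a \<in> A \<Longrightarrow> m \<le> a"
  shows "\<exists>g. is_glb A g"
proof -
  obtain s where s: "is_lub (uminus ` A) s"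
    using dedekind_complete_has_lub[of "uminus ` A" "- m"] assms by fastforce
  have "is_glb A (- s)"
    unfolding is_glb_def
  proof (intro conjI ballI allI impI)
    fix a
    assume "a \<in> A"
    then show "- s \<le> a"
      using s unfolding is_lub_def by (simp add: minus_le_iff)
  next
    fix t
    assume "\<forall>a\<in>A. t \<le> a"
    then have "s \<le> - t"
      using s unfolding is_lub_def by auto
    then show "t \<le> - s"
      by (simp add: le_minus_iff)
  qed
  then show ?thesis ..
qed

lemma dedekind_complete_archimedean:
  fixes v :: "'b::{ordered_real_vector,lattice}"
  assumes "dedekind_complete TYPE('b)" "0 \<le> v" "\<And>n::nat. real n *\<^sub>R v \<le> x"
  shows "v = 0"
proof -
  obtain s where s: "is_lub (range (\<lambda>n::nat. real n *\<^sub>R v)) s"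
    using dedekind_complete_has_lub[of "range (\<lambda>n::nat. real n *\<^sub>R v)" x] assms by auto
  have "real n *\<^sub>R v \<le> s - v" for n
  proof -
    have "real (Suc n) *\<^sub>R v \<le> s"
      using s unfolding is_lub_def by blast
    then show ?thesis
      by (simp add: le_diff_eq algebra_simps)
  qed
  then have "s \<le> s - v"
    using s unfolding is_lub_def by blast
  then show ?thesis
    using assms(2) by simp
qed

lemma mem_disj_compl: "x \<in> disj_compl D \<longleftrightarrow> (\<forall>a\<in>D. disj x a)"
  by (simp add: disj_compl_def)

lemma mem_disj_compl_singleton: "x \<in> disj_compl {w} \<longleftrightarrow> disj x w"
  by (simp add: disj_compl_def)

lemma zero_in_disj_compl [simp]: "0 \<in> disj_compl D"
  by (simp add: disj_compl_def)

lemma disj_compl_add: "x \<in> disj_compl D \<Longrightarrow> y \<in> disj_compl D \<Longrightarrow> x + y \<in> disj_compl D"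
  by (simp add: disj_compl_def disj_add)

lemma disj_compl_diff: "x \<in> disj_compl D \<Longrightarrow> y \<in> disj_compl D \<Longrightarrow> x - y \<in> disj_compl D"
  by (simp add: disj_compl_def disj_diff)

lemma disj_compl_scaleR: "x \<in> disj_compl D \<Longrightarrow> c *\<^sub>R x \<in> disj_compl D"
  by (simp add: disj_compl_def disj_scaleR)

lemma disj_compl_solid: "x \<in> disj_compl D \<Longrightarrow> labs y \<le> labs x \<Longrightarrow> y \<in> disj_compl D"
  by (meson mem_disj_compl disj_mono)

lemma is_ideal_disj_compl: "is_ideal (disj_compl D)"
  unfolding is_ideal_def using disj_compl_add disj_compl_scaleR disj_compl_solid by auto

lemma disj_of_is_lub:
  assumes s: "is_lub A s" and "a0 \<in> A" and A_disj: "\<And>a. a \<in> A \<Longrightarrow> disj a d"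
  shows "disj s d"
proof -
  have ub: "\<And>a. a \<in> A \<Longrightarrow> a \<le> s" and least: "\<And>t. (\<forall>a\<in>A. a \<le> t) \<Longrightarrow> s \<le> t"
    using s unfolding is_lub_def by auto
  have "neg_part s \<le> neg_part a0"
    using ub[OF \<open>a0 \<in> A\<close>] by (rule neg_part_antimono)
  then have neg_disj: "disj (neg_part s) d"
    using disj_mono[of "neg_part s" "neg_part a0" d] disj_neg_part[OF A_disj[OF \<open>a0 \<in> A\<close>]] by simp
  define t where "t = inf (pos_part s) (labs d)"
  have "0 \<le> t"
    unfolding t_def by (simp add: le_infI)
  have "a \<le> pos_part s - t" if "a \<in> A" for a
  proof -
    have "disj (pos_part a) t"
      using disj_pos_part[OF A_disj[OF that]] disj_mono[of t d "pos_part a"] \<open>0 \<le> t\<close>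
      unfolding t_def by (metis disj_sym inf_le2 labs_of_nonneg)
    then have "pos_part a + t = sup (pos_part a) t"
      using VL.add_eq_inf_sup[of "pos_part a" t] \<open>0 \<le> t\<close> by (simp add: disj_def)
    also have "\<dots> \<le> pos_part s"
      using pos_part_mono[OF ub[OF that]] unfolding t_def by simp
    finally have "pos_part a \<le> pos_part s - t"
      by (simp add: le_diff_eq)
    then show ?thesis
      using le_pos_part[of a] by (rule order_trans[rotated])
  qed
  then have "s \<le> pos_part s - t"
    using least by blast
  moreover have "0 \<le> pos_part s - t"
    using inf_le1[of "pos_part s" "labs d"] unfolding t_def by (simp only: diff_ge_0_iff_ge)
  ultimately have "pos_part s \<le> pos_part s - t"
    unfolding pos_part_def by (rule le_supI)
  then have "t = 0"
    using \<open>0 \<le> t\<close> by simp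
  then have "disj (pos_part s) d"
    unfolding t_def disj_def by simp
  then show ?thesis
    using disj_diff[OF _ neg_disj] pos_part_diff_neg_part by metis
qed

lemma is_band_disj_compl: "is_band (disj_compl D)"
  unfolding is_band_def
proof (intro conjI allI impI is_ideal_disj_compl)
  fix A s
  assume "A \<subseteq> disj_compl D \<and> is_lub A s"
  then have A: "A \<subseteq> disj_compl D" and s: "is_lub A s"
    by auto
  show "s \<in> disj_compl D"
  proof (cases "A = {}")
    case True
    then have "s \<le> 0" "s \<le> s + s"
      using s unfolding is_lub_def by blast+
    then show ?thesis
      by (metis antisym le_add_same_cancel1 zero_in_disj_compl)
  next
    case False
    then show ?thesis
      using A disj_of_is_lub[OF s] unfolding mem_disj_compl subset_iff by (metis ex_in_conv)
  qed
qed

abbreviation principal_band :: "'b::{ordered_real_vector,lattice} \<Rightarrow> 'b set" where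
  "principal_band w \<equiv> disj_compl (disj_compl {w})"

lemma mem_principal_band: "x \<in> principal_band w \<longleftrightarrow> (\<forall>e. disj e w \<longrightarrow> disj x e)"
  by (auto simp: disj_compl_def)

lemma principal_band_inter_disj_compl:
  "x \<in> principal_band w \<Longrightarrow> x \<in> disj_compl {w} \<Longrightarrow> x = 0"
  by (meson mem_principal_band mem_disj_compl_singleton disj_self_imp_zero)

lemma inf_scaleR_labs_in_principal_band:
  assumes "0 \<le> x" "0 \<le> c"
  shows "inf x (c *\<^sub>R labs w) \<in> principal_band w"
  unfolding mem_principal_band
proof (intro allI impI)
  fix e
  assume "disj e w"
  then have "disj (c *\<^sub>R labs w) e"
    by (metis disj_labs disj_scaleR disj_sym)
  moreover have "0 \<le> c *\<^sub>R labs w"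
    using assms(2) by (simp add: scaleR_nonneg_nonneg)
  then have "labs (inf x (c *\<^sub>R labs w)) \<le> labs (c *\<^sub>R labs w)"
    using assms(1) by simp
  ultimately show "disj (inf x (c *\<^sub>R labs w)) e"
    by (rule disj_mono[rotated])
qed

text \<open>The component of x in the band of w is the supremum of the truncations
  inf x (n |w|); the remainder is disjoint from w by the Archimedean property.\<close>
lemma principal_band_decomposition_nonneg:
  fixes x w :: "'b::{ordered_real_vector,lattice}"
  assumes dc: "dedekind_complete TYPE('b)" and "0 \<le> x"
  shows "\<exists>b. 0 \<le> b \<and> b \<le> x \<and> b \<in> principal_band w \<and> x - b \<in> disj_compl {w}"
proof -
  define W where "W = labs w"
  let ?A = "range (\<lambda>n::nat. inf x (real n *\<^sub>R W))"
  have "\<exists>s. is_lub ?A s"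
    by (rule dedekind_complete_has_lub[OF dc, where M = x]) (simp, blast intro: inf_le1)
  then obtain s where s: "is_lub ?A s" ..
  have ub: "inf x (real n *\<^sub>R W) \<le> s" for n
    using s unfolding is_lub_def by blast
  have "s \<le> x"
    using s unfolding is_lub_def by auto
  have "0 \<le> s"
    using ub[of 0] \<open>0 \<le> x\<close> by (simp add: inf_absorb2)
  define v where "v = inf (x - s) W"
  have "0 \<le> v"
    unfolding v_def W_def using \<open>s \<le> x\<close> by (simp add: le_infI)
  have "v \<le> x - s" "v \<le> W"
    unfolding v_def by simp_all
  have "real k *\<^sub>R v \<le> s" for k
  proof (induction k)
    case 0
    show ?case
      using \<open>0 \<le> s\<close> by simp
  next
    case (Suc k)
    have "real (Suc k) *\<^sub>R v = real k *\<^sub>R v + v"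
      by (simp add: algebra_simps)
    also have "\<dots> \<le> s + (x - s)"
      using Suc.IH \<open>v \<le> x - s\<close> by (rule add_mono)
    finally have "real (Suc k) *\<^sub>R v \<le> x"
      by simp
    moreover have "real (Suc k) *\<^sub>R v \<le> real (Suc k) *\<^sub>R W"
      using \<open>v \<le> W\<close> by (rule scaleR_left_mono) simp
    ultimately show ?case
      using ub[of "Suc k"] by (meson le_inf_iff order_trans)
  qed
  then have "v = 0"
    using dedekind_complete_archimedean[OF dc \<open>0 \<le> v\<close>] by blast
  then have "x - s \<in> disj_compl {w}"
    unfolding mem_disj_compl_singleton disj_def v_def W_def using \<open>s \<le> x\<close> by simp
  moreover have "?A \<subseteq> principal_band w"
    using inf_scaleR_labs_in_principal_band[OF \<open>0 \<le> x\<close> of_nat_0_le_iff] unfolding W_def by blast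
  then have "s \<in> principal_band w"
    using is_band_disj_compl s unfolding is_band_def by blast
  ultimately show ?thesis
    using \<open>0 \<le> s\<close> \<open>s \<le> x\<close> by blast
qed

lemma principal_band_decomposition:
  fixes x w :: "'b::{ordered_real_vector,lattice}"
  assumes "dedekind_complete TYPE('b)"
  shows "\<exists>b. b \<in> principal_band w \<and> x - b \<in> disj_compl {w}"
proof -
  obtain b1 b2 where
    b1: "b1 \<in> principal_band w" "pos_part x - b1 \<in> disj_compl {w}" and
    b2: "b2 \<in> principal_band w" "neg_part x - b2 \<in> disj_compl {w}"
    using principal_band_decomposition_nonneg[OF assms] pos_part_nonneg neg_part_nonneg by metis
  have "x - (b1 - b2) = (pos_part x - b1) - (neg_part x - b2)"
    by (subst (1) pos_part_diff_neg_part[of x, symmetric]) (simp add: algebra_simps)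
  then have "x - (b1 - b2) \<in> disj_compl {w}"
    using b1(2) b2(2) disj_compl_diff by metis
  moreover have "b1 - b2 \<in> principal_band w"
    using b1(1) b2(1) by (rule disj_compl_diff)
  ultimately show ?thesis
    by blast
qed

definition band_proj :: "'b::{ordered_real_vector,lattice} \<Rightarrow> 'b \<Rightarrow> 'b" where
  "band_proj w x = (SOME b. b \<in> principal_band w \<and> x - b \<in> disj_compl {w})"

lemma band_decomposition_unique:
  assumes "b \<in> principal_band w" "x - b \<in> disj_compl {w}"
    and "b' \<in> principal_band w" "x - b' \<in> disj_compl {w}"
  shows "b = b'"
proof -
  have "b - b' \<in> principal_band w"
    using assms(1,3) by (rule disj_compl_diff)
  moreover have "(x - b') - (x - b) \<in> disj_compl {w}"
    using assms(4,2) by (rule disj_compl_diff)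
  ultimately show ?thesis
    using principal_band_inter_disj_compl by fastforce
qed

context
  assumes dc: "dedekind_complete TYPE('b::{ordered_real_vector,lattice})"
begin

lemma band_proj: "band_proj w x \<in> principal_band w" "x - band_proj w x \<in> disj_compl {w}"
  for w x :: 'b
  unfolding band_proj_def using someI_ex[OF principal_band_decomposition[OF dc, of w x]] by blast+

lemma band_proj_eqI: "b \<in> principal_band w \<Longrightarrow> x - b \<in> disj_compl {w} \<Longrightarrow> band_proj w x = b"
  for w x b :: 'b
  using band_proj band_decomposition_unique by blast

lemma band_proj_add: "band_proj w (x + y) = band_proj w x + band_proj w y"
  for w x y :: 'b
proof (rule band_proj_eqI)
  show "band_proj w x + band_proj w y \<in> principal_band w"
    using band_proj disj_compl_add by blast
  have "x + y - (band_proj w x + band_proj w y) = (x - band_proj w x) + (y - band_proj w y)"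
    by simp
  then show "x + y - (band_proj w x + band_proj w y) \<in> disj_compl {w}"
    using band_proj disj_compl_add by metis
qed

lemma band_proj_scaleR: "band_proj w (c *\<^sub>R x) = c *\<^sub>R band_proj w x"
  for w x :: 'b
proof (rule band_proj_eqI)
  show "c *\<^sub>R band_proj w x \<in> principal_band w"
    using band_proj disj_compl_scaleR by blast
  have "c *\<^sub>R x - c *\<^sub>R band_proj w x = c *\<^sub>R (x - band_proj w x)"
    by (simp add: scaleR_diff_right)
  then show "c *\<^sub>R x - c *\<^sub>R band_proj w x \<in> disj_compl {w}"
    using band_proj disj_compl_scaleR by metis
qed

lemma band_proj_diff: "band_proj w (x - y) = band_proj w x - band_proj w y"
  for w x y :: 'b
  using band_proj_add[of w "x - y" y] by (simp add: algebra_simps)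

lemma band_proj_nonneg_le:
  fixes w x :: 'b
  assumes "0 \<le> x"
  shows "0 \<le> band_proj w x" "band_proj w x \<le> x"
proof -
  obtain b where "0 \<le> b" "b \<le> x" "b \<in> principal_band w" "x - b \<in> disj_compl {w}"
    using principal_band_decomposition_nonneg[OF dc assms] by blast
  moreover from this have "band_proj w x = b"
    by (intro band_proj_eqI)
  ultimately show "0 \<le> band_proj w x" "band_proj w x \<le> x"
    by simp_all
qed

lemma band_proj_of_disj: "disj x w \<Longrightarrow> band_proj w x = 0"
  for w x :: 'b
  by (rule band_proj_eqI) (simp_all add: mem_disj_compl_singleton)

lemma band_projection_band_proj: "band_projection (band_proj w)"
  for w :: 'b
  unfolding band_projection_def
proof (intro exI conjI allI)
  show "is_band (principal_band w)"
    by (rule is_band_disj_compl)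
  fix x
  show "band_proj w x \<in> principal_band w"
    using band_proj by blast
  have "disj e (x - band_proj w x)" if "e \<in> principal_band w" for e
    using that band_proj(2)[of x w] by (meson mem_disj_compl)
  then show "x - band_proj w x \<in> disj_compl (principal_band w)"
    by (simp add: mem_disj_compl disj_sym)
qed

lemma band_proj_le_of_disj_pos_part:
  fixes a b v :: 'b
  assumes "disj v (pos_part (a - b))"
  shows "band_proj v a \<le> band_proj v b"
proof -
  let ?d = "a - b"
  have "band_proj v (pos_part ?d) = 0"
    using assms by (simp add: band_proj_of_disj disj_sym)
  then have "band_proj v ?d \<le> 0"
    using band_proj_diff[of v "pos_part ?d" "neg_part ?d"] band_proj_nonneg_le(1)[of "neg_part ?d" v]
    by (simp add: pos_part_diff_neg_part)
  then show ?thesis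
    using band_proj_diff[of v a b] by simp
qed

lemma band_proj_le_of_mem_principal_band_pos_part:
  fixes a b r :: 'b
  assumes "r \<in> principal_band (pos_part (a - b))"
  shows "band_proj r b \<le> band_proj r a"
proof -
  let ?d = "a - b"
  have "disj r (neg_part ?d)"
    using assms disj_pos_part_neg_part[of ?d] by (meson mem_principal_band disj_sym)
  then have "band_proj r (neg_part ?d) = 0"
    by (simp add: band_proj_of_disj disj_sym)
  then have "0 \<le> band_proj r ?d"
    using band_proj_diff[of r "pos_part ?d" "neg_part ?d"] band_proj_nonneg_le(1)[of "pos_part ?d" r]
    by (simp add: pos_part_diff_neg_part)
  then show ?thesis
    using band_proj_diff[of r a b] by simp
qed

lemma band_proj_weak_order_unit_eq_0_iff:
  fixes r u :: 'b
  assumes "weak_order_unit u"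
  shows "band_proj r u = 0 \<longleftrightarrow> r = 0"
proof
  assume "band_proj r u = 0"
  then have "disj r u"
    using band_proj(2)[of u r] by (simp add: mem_disj_compl_singleton disj_sym)
  moreover have "r \<in> principal_band u"
    using assms by (simp add: weak_order_unit_def)
  ultimately show "r = 0"
    by (meson mem_principal_band disj_self_imp_zero)
next
  assume "r = 0"
  then show "band_proj r u = 0"
    by (simp add: band_proj_of_disj disj_sym)
qed

lemma mem_principal_band_of_no_disj_part:
  fixes r w :: 'b
  assumes "0 \<le> r" and no_part: "\<And>v. 0 \<le> v \<Longrightarrow> v \<le> r \<Longrightarrow> disj v w \<Longrightarrow> v = 0"
  shows "r \<in> principal_band w"
proof -
  let ?v = "r - band_proj w r"
  have "0 \<le> ?v" "?v \<le> r"
    using band_proj_nonneg_le[OF assms(1), of w] by simp_all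
  moreover have "disj ?v w"
    using band_proj(2)[of r w] by (simp add: mem_disj_compl_singleton)
  ultimately have "?v = 0"
    by (rule no_part)
  then show ?thesis
    using band_proj(1)[of w r] by simp
qed

lemma partition_of_unity_band_proj:
  fixes M :: "'b set"
  assumes "pairwise disj M" and complete: "\<And>r. (\<forall>v\<in>M. disj r v) \<Longrightarrow> r = 0"
  shows "partition_of_unity (band_proj ` M) id"
  unfolding partition_of_unity_def
proof (intro conjI ballI impI allI)
  fix a
  assume "a \<in> band_proj ` M"
  then show "band_projection (id a)"
    using band_projection_band_proj by auto
next
  fix a b
  assume "a \<in> band_proj ` M" "b \<in> band_proj ` M" "a \<noteq> b"
  then obtain v1 v2 where "v1 \<in> M" "v2 \<in> M" "v1 \<noteq> v2" "a = band_proj v1" "b = band_proj v2"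
    by blast
  then have "disj v1 v2"
    using assms(1) by (simp add: pairwise_def)
  have "band_proj v1 (band_proj v2 z) = 0" for z
    using band_proj(1)[of v2 z] \<open>disj v1 v2\<close> by (meson mem_principal_band band_proj_of_disj)
  then show "id a \<circ> id b = (\<lambda>_. 0)"
    using \<open>a = band_proj v1\<close> \<open>b = band_proj v2\<close> by auto
next
  fix Q
  assume "band_projection Q \<and> (\<forall>a\<in>band_proj ` M. bp_le (id a) Q)"
  then have PQ: "band_proj v (Q z) = band_proj v z" if "v \<in> M" for v z
    using that unfolding bp_le_def by (metis comp_apply id_apply image_eqI)
  have "z - Q z = 0" for z
  proof (rule complete, intro ballI)
    fix v
    assume "v \<in> M"
    then have "band_proj v (z - Q z) = 0"
      using PQ by (simp add: band_proj_diff)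
    then show "disj (z - Q z) v"
      using band_proj(2)[of "z - Q z" v] by (simp add: mem_disj_compl_singleton)
  qed
  then show "Q = id"
    by auto
qed

end

section \<open>The fragment envelope of two Uryson operators\<close>

lemma orth_additiveD: "orth_additive T \<Longrightarrow> disj x y \<Longrightarrow> T (x + y) = T x + T y"
  by (simp add: orth_additive_def)

lemma orth_additive_zero: "orth_additive T \<Longrightarrow> T 0 = 0"
  unfolding orth_additive_def by (metis add.right_neutral add_cancel_right_right disj_zero)

definition fragment_mixes :: "('a::{ordered_real_vector,lattice} \<Rightarrow> 'b::{ordered_real_vector,lattice}) \<Rightarrow> ('a \<Rightarrow> 'b) \<Rightarrow> 'a \<Rightarrow> 'b set" where
  "fragment_mixes S T x = {T y + S (x - y) | y. y \<in> fragments x}"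

lemma fragment_mixesI: "y \<in> fragments x \<Longrightarrow> T y + S (x - y) \<in> fragment_mixes S T x"
  unfolding fragment_mixes_def by blast

lemma fragment_mixes_add:
  assumes "orth_additive S" "orth_additive T" "disj x y"
  shows "fragment_mixes S T (x + y) = {a + b | a b. a \<in> fragment_mixes S T x \<and> b \<in> fragment_mixes S T y}"
proof -
  have mix_add: "T (z1 + z2) + S (x + y - (z1 + z2)) = (T z1 + S (x - z1)) + (T z2 + S (y - z2))"
    if "z1 \<in> fragments x" "z2 \<in> fragments y" for z1 z2
  proof -
    have T_add: "T (z1 + z2) = T z1 + T z2"
      using assms(2) fragments_add(2)[OF assms(3) that] by (rule orth_additiveD)
    have S_add: "S ((x - z1) + (y - z2)) = S (x - z1) + S (y - z2)"
      using assms(1) fragments_add(3)[OF assms(3) that] by (rule orth_additiveD)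
    have rest: "x + y - (z1 + z2) = (x - z1) + (y - z2)"
      by (simp add: algebra_simps)
    have "T (z1 + z2) + S (x + y - (z1 + z2)) = (T z1 + T z2) + (S (x - z1) + S (y - z2))"
      by (simp only: rest T_add S_add)
    also have "\<dots> = (T z1 + S (x - z1)) + (T z2 + S (y - z2))"
      by (simp only: add_ac)
    finally show ?thesis .
  qed
  show ?thesis
    unfolding fragment_mixes_def
  proof (intro equalityI subsetI)
    fix w
    assume "w \<in> {T z + S (x + y - z) | z. z \<in> fragments (x + y)}"
    then obtain z where "z \<in> fragments (x + y)" "w = T z + S (x + y - z)"
      by blast
    moreover obtain z1 z2 where z12: "z1 \<in> fragments x" "z2 \<in> fragments y" and "z = z1 + z2"
      using fragments_add_split[OF assms(3) \<open>z \<in> fragments (x + y)\<close>] by blast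
    ultimately have "w = (T z1 + S (x - z1)) + (T z2 + S (y - z2))"
      using mix_add[OF z12] by simp
    then show "w \<in> {a + b | a b. a \<in> {T z + S (x - z) | z. z \<in> fragments x}
                                   \<and> b \<in> {T z + S (y - z) | z. z \<in> fragments y}}"
      using z12 by blast
  next
    fix w
    assume "w \<in> {a + b | a b. a \<in> {T z + S (x - z) | z. z \<in> fragments x}
                             \<and> b \<in> {T z + S (y - z) | z. z \<in> fragments y}}"
    then obtain z1 z2 where z12: "z1 \<in> fragments x" "z2 \<in> fragments y"
      and "w = (T z1 + S (x - z1)) + (T z2 + S (y - z2))"
      by blast
    then have "w = T (z1 + z2) + S (x + y - (z1 + z2))"
      using mix_add[OF z12] by simp
    then show "w \<in> {T z + S (x + y - z) | z. z \<in> fragments (x + y)}"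
      using fragments_add(1)[OF assms(3) z12] by blast
  qed
qed

text \<open>For positive Uryson operators this is the infimum of S and T in U(E,F); only its being a
  Uryson operator below both is needed.\<close>
definition fragment_envelope :: "('a::{ordered_real_vector,lattice} \<Rightarrow> 'b::{ordered_real_vector,lattice}) \<Rightarrow> ('a \<Rightarrow> 'b) \<Rightarrow> 'a \<Rightarrow> 'b" where
  "fragment_envelope S T x = (SOME g. is_glb (fragment_mixes S T x) g)"

lemma uryson_pos_orth_additive: "S \<in> uryson_pos \<Longrightarrow> orth_additive S"
  by (simp add: uryson_pos_def uryson_def)

lemma uryson_pos_nonneg: "S \<in> uryson_pos \<Longrightarrow> 0 \<le> S z"
  by (simp add: uryson_pos_def uryson_le_def)

context
  fixes S T :: "'a::{ordered_real_vector,lattice} \<Rightarrow> 'b::{ordered_real_vector,lattice}"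
  assumes dc: "dedekind_complete TYPE('b)"
    and S: "S \<in> uryson_pos" and T: "T \<in> uryson_pos"
begin

lemma fragment_mixes_nonneg: "a \<in> fragment_mixes S T x \<Longrightarrow> 0 \<le> a"
  unfolding fragment_mixes_def using uryson_pos_nonneg[OF S] uryson_pos_nonneg[OF T] add_nonneg_nonneg by blast

lemma is_glb_fragment_envelope: "is_glb (fragment_mixes S T x) (fragment_envelope S T x)"
proof -
  have "fragment_mixes S T x \<noteq> {}"
    using fragment_mixesI[OF zero_in_fragments] by (metis empty_iff)
  then have "\<exists>g. is_glb (fragment_mixes S T x) g"
    by (rule dedekind_complete_has_glb[OF dc]) (rule fragment_mixes_nonneg)
  then show ?thesis
    unfolding fragment_envelope_def by (rule someI_ex)
qed

lemma fragment_envelope_nonneg: "0 \<le> fragment_envelope S T x"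
  using is_glb_fragment_envelope[of x] fragment_mixes_nonneg unfolding is_glb_def by blast

lemma fragment_envelope_le: "fragment_envelope S T x \<le> S x" "fragment_envelope S T x \<le> T x"
proof -
  have "S 0 = 0" "T 0 = 0"
    using S T by (simp_all add: uryson_pos_orth_additive orth_additive_zero)
  moreover have "T 0 + S (x - 0) \<in> fragment_mixes S T x" "T x + S (x - x) \<in> fragment_mixes S T x"
    by (intro fragment_mixesI zero_in_fragments self_in_fragments)+
  ultimately have "S x \<in> fragment_mixes S T x" "T x \<in> fragment_mixes S T x"
    by simp_all
  then show "fragment_envelope S T x \<le> S x" "fragment_envelope S T x \<le> T x"
    using is_glb_fragment_envelope[of x] unfolding is_glb_def by blast+
qed

lemma fragment_envelope_in_uryson: "fragment_envelope S T \<in> uryson"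
proof -
  have "order_bounded_op S"
    using S by (simp add: uryson_pos_def uryson_def)
  have "fragment_envelope S T (x + y) = fragment_envelope S T x + fragment_envelope S T y"
    if "disj x y" for x y
  proof -
    have "is_glb (fragment_mixes S T (x + y)) (fragment_envelope S T x + fragment_envelope S T y)"
      using is_glb_set_plus[OF is_glb_fragment_envelope is_glb_fragment_envelope]
      by (simp add: fragment_mixes_add[OF uryson_pos_orth_additive[OF S] uryson_pos_orth_additive[OF T] that])
    then show ?thesis
      by (rule is_glb_unique[OF is_glb_fragment_envelope])
  qed
  then have "orth_additive (fragment_envelope S T)"
    unfolding orth_additive_def by blast
  moreover have "order_bounded_op (fragment_envelope S T)"
    unfolding order_bounded_op_def
  proof (intro allI impI)
    fix A :: "'a set"
    assume "\<exists>a b. \<forall>x\<in>A. a \<le> x \<and> x \<le> b"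
    then obtain d where "\<forall>x\<in>A. S x \<le> d"
      using \<open>order_bounded_op S\<close> unfolding order_bounded_op_def by blast
    then have "\<forall>x\<in>A. 0 \<le> fragment_envelope S T x \<and> fragment_envelope S T x \<le> d"
      using fragment_envelope_nonneg fragment_envelope_le(1) order_trans by blast
    then show "\<exists>c d. \<forall>x\<in>A. c \<le> fragment_envelope S T x \<and> fragment_envelope S T x \<le> d"
      by blast
  qed
  ultimately show ?thesis
    unfolding uryson_def by blast
qed

lemma uryson_inf_zero_fragment_mixes_bound:
  assumes "uryson_inf_zero S T" and "\<forall>y\<in>fragments x. c \<le> T y + S (x - y)"
  shows "c \<le> 0"
proof -
  have "uryson_le (fragment_envelope S T) S" "uryson_le (fragment_envelope S T) T"
    unfolding uryson_le_def using fragment_envelope_le by auto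
  then have "uryson_le (fragment_envelope S T) (\<lambda>_. 0)"
    using assms(1) fragment_envelope_in_uryson unfolding uryson_inf_zero_def by blast
  then have "fragment_envelope S T x \<le> 0"
    unfolding uryson_le_def by (simp add: le_minus_iff)
  moreover have "c \<le> fragment_envelope S T x"
    using is_glb_fragment_envelope[of x] assms(2) unfolding is_glb_def fragment_mixes_def by blast
  ultimately show ?thesis
    by (rule order_trans[rotated])
qed

end

section \<open>Exhaustion\<close>

lemma exists_maximal_pairwise_disj_subset:
  fixes G :: "'a::{ordered_real_vector,lattice} set"
  shows "\<exists>M \<subseteq> G. pairwise disj M \<and> (\<forall>v\<in>G. (\<forall>m\<in>M. disj v m) \<longrightarrow> v \<in> M)"
proof -
  define MM where "MM = {M. M \<subseteq> G \<and> pairwise disj M}"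
  have "\<Union>C \<in> MM" if "C \<in> chains MM" for C
  proof -
    have "C \<subseteq> MM" and chain: "\<And>A B. A \<in> C \<Longrightarrow> B \<in> C \<Longrightarrow> A \<subseteq> B \<or> B \<subseteq> A"
      using that unfolding chains_def chain_subset_def by auto
    show ?thesis
      unfolding MM_def
    proof (intro CollectI conjI pairwiseI)
      show "\<Union>C \<subseteq> G"
        using \<open>C \<subseteq> MM\<close> unfolding MM_def by blast
      fix v1 v2
      assume "v1 \<in> \<Union>C" "v2 \<in> \<Union>C" "v1 \<noteq> v2"
      then obtain A B where "A \<in> C" "B \<in> C" "v1 \<in> A" "v2 \<in> B"
        by blast
      then have "{v1, v2} \<subseteq> A \<or> {v1, v2} \<subseteq> B"
        using chain by blast
      then show "disj v1 v2"
        using \<open>A \<in> C\<close> \<open>B \<in> C\<close> \<open>C \<subseteq> MM\<close> \<open>v1 \<noteq> v2\<close> unfolding MM_def pairwise_def by blast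
    qed
  qed
  then obtain M where "M \<in> MM" and maximal: "\<And>X. X \<in> MM \<Longrightarrow> M \<subseteq> X \<Longrightarrow> X = M"
    using Zorn_Lemma[of MM] by blast
  have "v \<in> M" if "v \<in> G" "\<forall>m\<in>M. disj v m" for v
  proof -
    have "insert v M \<in> MM"
      using \<open>M \<in> MM\<close> that unfolding MM_def by (auto simp: pairwise_insert disj_sym)
    then show ?thesis
      using maximal by blast
  qed
  then show ?thesis
    using \<open>M \<in> MM\<close> unfolding MM_def by blast
qed

lemma exists_partition_of_unity_below:
  fixes g :: "'i \<Rightarrow> 'b::{ordered_real_vector,lattice}"
  assumes dc: "dedekind_complete TYPE('b)" and u: "weak_order_unit u" and "\<epsilon> > 0"
    and g_nonneg: "\<And>y. y \<in> Y \<Longrightarrow> 0 \<le> g y"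
    and g_inf: "\<And>c. \<forall>y\<in>Y. c \<le> g y \<Longrightarrow> c \<le> 0"
  shows "\<exists>(D :: ('b \<Rightarrow> 'b) set) (\<pi> :: ('b \<Rightarrow> 'b) \<Rightarrow> ('b \<Rightarrow> 'b)) (xs :: ('b \<Rightarrow> 'b) \<Rightarrow> 'i).
           partition_of_unity D \<pi> \<and> (\<forall>a\<in>D. xs a \<in> Y) \<and> (\<forall>a\<in>D. \<pi> a (g (xs a)) \<le> \<epsilon> *\<^sub>R u)"
proof -
  have "0 \<le> u"
    using u by (simp add: weak_order_unit_def)
  then have "0 \<le> \<epsilon> *\<^sub>R u"
    using \<open>\<epsilon> > 0\<close> by (simp add: scaleR_nonneg_nonneg)
  define excess where "excess y = pos_part (g y - \<epsilon> *\<^sub>R u)" for y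
  obtain M where M: "M \<subseteq> {v. \<exists>y\<in>Y. disj v (excess y)}" "pairwise disj M"
    and maximal: "\<And>v. \<exists>y\<in>Y. disj v (excess y) \<Longrightarrow> \<forall>m\<in>M. disj v m \<Longrightarrow> v \<in> M"
    using exists_maximal_pairwise_disj_subset[of "{v. \<exists>y\<in>Y. disj v (excess y)}"] by auto
  have complete: "r = 0" if r: "\<forall>v\<in>M. disj r v" for r
  proof -
    have in_band: "labs r \<in> principal_band (excess y)" if "y \<in> Y" for y
    proof (rule mem_principal_band_of_no_disj_part[OF dc labs_ge_zero])
      fix v
      assume "0 \<le> v" "v \<le> labs r" "disj v (excess y)"
      then have "\<forall>m\<in>M. disj v m"
        using r disj_mono[of v r] by simp
      then have "v \<in> M"
        using maximal \<open>y \<in> Y\<close> \<open>disj v (excess y)\<close> by blast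
      then show "v = 0"
        using \<open>\<forall>m\<in>M. disj v m\<close> disj_self_imp_zero by blast
    qed
    have "\<epsilon> *\<^sub>R band_proj (labs r) u \<le> g y" if "y \<in> Y" for y
    proof -
      have "\<epsilon> *\<^sub>R band_proj (labs r) u = band_proj (labs r) (\<epsilon> *\<^sub>R u)"
        by (simp add: band_proj_scaleR[OF dc])
      also have "\<dots> \<le> band_proj (labs r) (g y)"
        using in_band[OF that] unfolding excess_def by (rule band_proj_le_of_mem_principal_band_pos_part[OF dc])
      also have "\<dots> \<le> g y"
        using band_proj_nonneg_le(2)[OF dc g_nonneg[OF that]] .
      finally show ?thesis .
    qed
    then have "\<epsilon> *\<^sub>R band_proj (labs r) u \<le> 0"
      using g_inf by blast
    then have "band_proj (labs r) u \<le> 0"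
      using \<open>\<epsilon> > 0\<close> by (simp add: scaleR_le_0_iff)
    then have "band_proj (labs r) u = 0"
      using band_proj_nonneg_le(1)[OF dc \<open>0 \<le> u\<close>] by (rule antisym)
    then show "r = 0"
      using band_proj_weak_order_unit_eq_0_iff[OF dc u] by simp
  qed
  have "\<exists>y\<in>Y. a (g y) \<le> \<epsilon> *\<^sub>R u" if "a \<in> band_proj ` M" for a
  proof -
    obtain v y where "a = band_proj v" "y \<in> Y" "disj v (excess y)"
      using M(1) \<open>a \<in> band_proj ` M\<close> by blast
    then have "a (g y) \<le> band_proj v (\<epsilon> *\<^sub>R u)"
      unfolding excess_def by (simp add: band_proj_le_of_disj_pos_part[OF dc])
    also have "\<dots> \<le> \<epsilon> *\<^sub>R u"
      using band_proj_nonneg_le(2)[OF dc \<open>0 \<le> \<epsilon> *\<^sub>R u\<close>] .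
    finally show ?thesis
      using \<open>y \<in> Y\<close> by blast
  qed
  then obtain xs where "\<forall>a\<in>band_proj ` M. xs a \<in> Y \<and> a (g (xs a)) \<le> \<epsilon> *\<^sub>R u"
    by metis
  moreover have "partition_of_unity (band_proj ` M) id"
    using partition_of_unity_band_proj[OF dc M(2)] complete by blast
  ultimately show ?thesis
    unfolding id_apply by blast
qed

theorem theorem3p2:
  fixes S T :: "'a::{ordered_real_vector,lattice} \<Rightarrow> 'b::{ordered_real_vector,lattice}"
  assumes "dedekind_complete TYPE('b)"
    and "S \<in> uryson_pos" and "T \<in> uryson_pos"
    and "uryson_inf_zero S T"
    and "weak_order_unit u"
    and "(\<epsilon>::real) > 0"
  shows "\<exists>(D :: ('b \<Rightarrow> 'b) set) (\<pi> :: ('b \<Rightarrow> 'b) \<Rightarrow> ('b \<Rightarrow> 'b)) (xs :: ('b \<Rightarrow> 'b) \<Rightarrow> 'a).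
           partition_of_unity D \<pi> \<and> (\<forall>a\<in>D. xs a \<in> fragments x) \<and>
           (\<forall>a\<in>D. \<pi> a (T (xs a) + S (x - xs a)) \<le> \<epsilon> *\<^sub>R u)"
proof (rule exists_partition_of_unity_below[OF assms(1,5,6)])
  fix y
  show "0 \<le> T y + S (x - y)"
    using uryson_pos_nonneg[OF assms(2)] uryson_pos_nonneg[OF assms(3)] by (simp add: add_nonneg_nonneg)
next
  fix c
  assume "\<forall>y\<in>fragments x. c \<le> T y + S (x - y)"
  then show "c \<le> 0"
    by (rule uryson_inf_zero_fragment_mixes_bound[OF assms(1-4)])
qed

end
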